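(* Let $n\geq 2$ be an integer and let $A\subseteq\mathbb{T}$ be an $m$-measurable set with $m(A)=1$. Then $\bigcup_{\lambda\in A}\ker(W_n^{*}-\lambda I)$ spans a dense subspace of $H^2$.
   Context: $\mathbb{T}$ is the unit circle in $\mathbb{C}$ and $m$ is the normalized Lebesgue measure on $\mathbb{T}$. $H^2$ denotes the Hardy space of analytic functions $f(z)=\sum_{k\ge0}\hat f(k)z^k$ on the open unit disk with $\sum_{k}|\hat f(k)|^2<\infty$. For $n\in\mathbb{N}$, $W_n$ is the bounded operator on $H^2$ given by $W_nf(z)=(1+z+\cdots+z^{n-1})f(z^n)$, and $W_n^{*}$ is its adjoint. *)

theory Defs
  imports "HOL-Analysis.Analysis"
begin

text \<open>H^2 is modelled by the sequences of Taylor coefficients (f k = hat f(k)).\<close>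
definition H2 :: "(nat \<Rightarrow> complex) set" where
  "H2 = {f. summable (\<lambda>k. (cmod (f k))\<^sup>2)}"

definition h2_inner :: "(nat \<Rightarrow> complex) \<Rightarrow> (nat \<Rightarrow> complex) \<Rightarrow> complex" where
  "h2_inner f g = (\<Sum>k. f k * cnj (g k))"

definition h2_norm :: "(nat \<Rightarrow> complex) \<Rightarrow> real" where
  "h2_norm f = sqrt (\<Sum>k. (cmod (f k))\<^sup>2)"

text \<open>W_n f(z) = (1+z+...+z^(n-1)) f(z^n): on coefficients, (W_n f)^(k) = hat f(k div n).\<close>
definition W :: "nat \<Rightarrow> (nat \<Rightarrow> complex) \<Rightarrow> (nat \<Rightarrow> complex)" where
  "W n f = (\<lambda>k. f (k div n))"

definition W_adj :: "nat \<Rightarrow> (nat \<Rightarrow> complex) \<Rightarrow> (nat \<Rightarrow> complex)" where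
  "W_adj n g = (THE h. h \<in> H2 \<and> (\<forall>f\<in>H2. h2_inner (W n f) g = h2_inner f h))"

definition eigsp :: "nat \<Rightarrow> complex \<Rightarrow> (nat \<Rightarrow> complex) set" where
  "eigsp n lam = {g \<in> H2. (\<forall>k. W_adj n g k - lam * g k = 0)}"

text \<open>Normalized Lebesgue measure m on the unit circle, via t \<mapsto> exp(2 pi i t), t \<in> [0,1).\<close>
definition circle_param :: "complex set \<Rightarrow> real set" where
  "circle_param A = {t \<in> {0..<1}. cis (2 * pi * t) \<in> A}"

definition circle_measurable :: "complex set \<Rightarrow> bool" where
  "circle_measurable A \<longleftrightarrow> circle_param A \<in> sets lebesgue"

definition circle_measure :: "complex set \<Rightarrow> real" where
  "circle_measure A = measure lebesgue (circle_param A)"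

end

theory Submission
  imports Defs
begin

(* On Taylor coefficients W_n^* acts by (W^* g)(j) = \<Sum>_{r<n} g(nj + r). Write S^d a for the
   dilation k \<mapsto> a(k div n^d) / n^d, so that W^* S^(d+1) a = S^d a. If a is supported in a block
   [L, nL) with L \<ge> 1 and W^* a = \<mu> e_0, then for every |\<lambda>| \<le> 1
     G(\<lambda>) = \<mu> e_0 + (\<lambda> - 1) \<Sum>_d \<lambda>^d S^d a
   is an eigenvector of W^* for \<lambda>. The S^d a have disjoint supports and norms \<le> n^(-d/2) |a|,
   so \<lambda> \<mapsto> G(\<lambda>) is Hoelder continuous. A set of full measure is dense in the circle, hence every
   G(\<lambda>) with |\<lambda>| = 1 lies in the closed span of the eigenvectors with eigenvalues in A; so does
   G(1) = \<mu> e_0. Averaging G over the M-th roots of unity recovers its Taylor coefficients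
   [j = 0] \<mu> e_0 + S^(j-1) a - S^j a up to an error O(2^(-M/2)), and these telescope to \<mu> e_0 - S^J a.
   Thus every S^J a lies in the closed span. The seeds a = e_p (1 \<le> p < n, \<mu> = 1) and
   a = e_k - S e_(k div n) (k \<ge> n, \<mu> = 0) then give all unit vectors by induction on k. *)

section \<open>Coefficient sequences\<close>

lemma H2_partial_sums_bound:
  assumes "\<And>N. (\<Sum>k<N. (cmod (x k))\<^sup>2) \<le> K\<^sup>2" "0 \<le> K"
  shows "x \<in> H2" "h2_norm x \<le> K"
proof -
  have summable: "summable (\<lambda>k. (cmod (x k))\<^sup>2)"
    by (rule summableI_nonneg_bounded[where x="K\<^sup>2"]) (use assms in auto)
  then show "x \<in> H2" by (simp add: H2_def)
  have "(\<Sum>k. (cmod (x k))\<^sup>2) \<le> K\<^sup>2" by (rule suminf_le_const[OF summable assms(1)])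
  then show "h2_norm x \<le> K"
    unfolding h2_norm_def using assms(2) real_le_lsqrt by auto
qed

lemma h2_norm_nonneg: "x \<in> H2 \<Longrightarrow> 0 \<le> h2_norm x"
  by (simp add: h2_norm_def H2_def suminf_nonneg)

lemma sum_le_h2_norm_sq: "x \<in> H2 \<Longrightarrow> (\<Sum>k<N. (cmod (x k))\<^sup>2) \<le> (h2_norm x)\<^sup>2"
  unfolding h2_norm_def H2_def by (simp add: suminf_nonneg sum_le_suminf)

lemma h2_add:
  assumes "x \<in> H2" "y \<in> H2"
  shows "(\<lambda>k. x k + y k) \<in> H2" "h2_norm (\<lambda>k. x k + y k) \<le> h2_norm x + h2_norm y"
proof -
  have partial_L2: "L2_set (\<lambda>k. cmod (z k)) {..<N} \<le> h2_norm z" if "z \<in> H2" for z N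
    using real_sqrt_le_mono[OF sum_le_h2_norm_sq[OF that, of N]]
    by (simp add: L2_set_def h2_norm_nonneg[OF that])
  have bound: "(\<Sum>k<N. (cmod (x k + y k))\<^sup>2) \<le> (h2_norm x + h2_norm y)\<^sup>2" for N
  proof -
    have "L2_set (\<lambda>k. cmod (x k + y k)) {..<N} \<le> L2_set (\<lambda>k. cmod (x k) + cmod (y k)) {..<N}"
      by (rule L2_set_mono) (auto simp: norm_triangle_ineq)
    also have "\<dots> \<le> L2_set (\<lambda>k. cmod (x k)) {..<N} + L2_set (\<lambda>k. cmod (y k)) {..<N}"
      by (rule L2_set_triangle_ineq)
    also have "\<dots> \<le> h2_norm x + h2_norm y"
      using partial_L2[OF assms(1)] partial_L2[OF assms(2)] by (rule add_mono)
    finally have "sqrt (\<Sum>k<N. (cmod (x k + y k))\<^sup>2) \<le> h2_norm x + h2_norm y"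
      by (simp add: L2_set_def)
    then show ?thesis by (rule sqrt_le_D)
  qed
  have "0 \<le> h2_norm x + h2_norm y"
    using h2_norm_nonneg[OF assms(1)] h2_norm_nonneg[OF assms(2)] by simp
  then show "(\<lambda>k. x k + y k) \<in> H2" "h2_norm (\<lambda>k. x k + y k) \<le> h2_norm x + h2_norm y"
    using H2_partial_sums_bound[OF bound] by auto
qed

lemma h2_scale:
  assumes "x \<in> H2"
  shows "(\<lambda>k. c * x k) \<in> H2" "h2_norm (\<lambda>k. c * x k) \<le> cmod c * h2_norm x"
proof -
  have "(\<Sum>k<N. (cmod (c * x k))\<^sup>2) = (cmod c)\<^sup>2 * (\<Sum>k<N. (cmod (x k))\<^sup>2)" for N
    by (simp add: norm_mult power_mult_distrib sum_distrib_left)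
  also have "\<dots> N \<le> (cmod c * h2_norm x)\<^sup>2" for N
    using mult_left_mono[OF sum_le_h2_norm_sq[OF assms, of N], of "(cmod c)\<^sup>2"]
    by (simp add: power_mult_distrib)
  finally have bound: "(\<Sum>k<N. (cmod (c * x k))\<^sup>2) \<le> (cmod c * h2_norm x)\<^sup>2" for N .
  have "0 \<le> cmod c * h2_norm x" using h2_norm_nonneg[OF assms] by simp
  then show "(\<lambda>k. c * x k) \<in> H2" "h2_norm (\<lambda>k. c * x k) \<le> cmod c * h2_norm x"
    using H2_partial_sums_bound[OF bound] by auto
qed

lemma H2_diff: "x \<in> H2 \<Longrightarrow> y \<in> H2 \<Longrightarrow> (\<lambda>k. x k - y k) \<in> H2"
  using h2_add(1)[of x "\<lambda>k. (-1) * y k"] h2_scale(1)[of y "-1"] by simp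

lemma H2_finite_support:
  assumes "\<And>k. k \<ge> N \<Longrightarrow> x k = 0"
  shows "x \<in> H2"
proof -
  have "(\<Sum>k<M. (cmod (x k))\<^sup>2) \<le> (\<Sum>k<N. (cmod (x k))\<^sup>2)" for M
  proof -
    have "(\<Sum>k<M. (cmod (x k))\<^sup>2) \<le> (\<Sum>k<max M N. (cmod (x k))\<^sup>2)"
      by (rule sum_mono2) auto
    also have "\<dots> = (\<Sum>k<N. (cmod (x k))\<^sup>2)"
      by (rule sum.mono_neutral_right) (auto simp: assms)
    finally show ?thesis .
  qed
  then show ?thesis
    using H2_partial_sums_bound(1)[of x "sqrt (\<Sum>k<N. (cmod (x k))\<^sup>2)"] by (simp add: sum_nonneg)
qed

lemma H2_zero: "(\<lambda>k. 0) \<in> H2" and h2_norm_zero: "h2_norm (\<lambda>k. 0) = 0"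
  by (auto simp: H2_def h2_norm_def)

lemma summable_h2_inner:
  assumes "f \<in> H2" "g \<in> H2"
  shows "summable (\<lambda>k. f k * cnj (g k))"
proof (rule summable_norm_cancel, rule summable_comparison_test')
  show "summable (\<lambda>k. (cmod (f k))\<^sup>2 + (cmod (g k))\<^sup>2)"
    using assms by (auto simp: H2_def intro: summable_add)
  show "norm (norm (f k * cnj (g k))) \<le> (cmod (f k))\<^sup>2 + (cmod (g k))\<^sup>2" for k
  proof -
    have "norm (norm (f k * cnj (g k))) = cmod (f k) * cmod (g k)" by (simp add: norm_mult)
    moreover have "0 \<le> cmod (f k) * cmod (g k)" by simp
    ultimately show ?thesis using sum_squares_bound[of "cmod (f k)" "cmod (g k)"] by linarith
  qed
qed

lemma sum_le_sums_nonneg: "f sums s \<Longrightarrow> (\<And>d. 0 \<le> f d) \<Longrightarrow> (\<Sum>d<N. f d) \<le> (s::real)"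
  using sum_le_suminf[of f "{..<N}"] by (simp add: sums_iff)

lemma h2_norm_tail_small:
  assumes f: "f \<in> H2" and "0 < \<epsilon>"
  obtains N where "h2_norm (\<lambda>k. if k < N then 0 else f k) < \<epsilon>"
proof -
  have summable: "summable (\<lambda>k. (cmod (f k))\<^sup>2)" using f by (simp add: H2_def)
  obtain N where N: "\<And>m. N \<le> m \<Longrightarrow> norm (\<Sum>i. (cmod (f (i + m)))\<^sup>2) < \<epsilon>\<^sup>2"
    using suminf_exist_split[OF _ summable, of "\<epsilon>\<^sup>2"] \<open>0 < \<epsilon>\<close> by auto
  define T where "T = (\<Sum>i. (cmod (f (i + N)))\<^sup>2)"
  have "0 \<le> T" unfolding T_def by (intro suminf_nonneg summable_ignore_initial_segment summable) simp
  have "(\<lambda>i. (cmod (f (i + N)))\<^sup>2) sums T"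
    unfolding T_def by (intro summable_sums summable_ignore_initial_segment summable)
  then have "(\<lambda>k. (cmod (if k < N then 0 else f k))\<^sup>2) sums T"
    using sums_zero_iff_shift[of N "\<lambda>k. (cmod (if k < N then 0 else f k))\<^sup>2" T] by simp
  then have "(\<Sum>k<M. (cmod (if k < N then 0 else f k))\<^sup>2) \<le> (sqrt T)\<^sup>2" for M
    using \<open>0 \<le> T\<close> by (simp add: sum_le_sums_nonneg)
  then have "h2_norm (\<lambda>k. if k < N then 0 else f k) \<le> sqrt T"
    by (rule H2_partial_sums_bound(2)) (use \<open>0 \<le> T\<close> in simp)
  also have "\<dots> < \<epsilon>"
  proof (rule real_less_lsqrt)
    show "T < \<epsilon>\<^sup>2" using N[of N] \<open>0 \<le> T\<close> by (simp add: T_def)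
  qed (use \<open>0 < \<epsilon>\<close> in simp)
  finally show ?thesis by (rule that)
qed

definition unit_vec :: "nat \<Rightarrow> nat \<Rightarrow> complex" where
  "unit_vec p k = (if k = p then 1 else 0)"

lemma unit_vec_mult: "unit_vec p k * x = (if k = p then x else 0)"
  by (simp add: unit_vec_def)

lemma H2_unit_vec: "unit_vec p \<in> H2"
  by (rule H2_finite_support[of "Suc p"]) (simp add: unit_vec_def)

lemma h2_inner_unit_vec: "h2_inner (unit_vec p) h = cnj (h p)"
proof -
  have "(\<lambda>k. unit_vec p k * cnj (h k)) = (\<lambda>k. if k = p then cnj (h p) else 0)"
    by (auto simp: unit_vec_def)
  then show ?thesis
    unfolding h2_inner_def using sums_single[of p "\<lambda>_. cnj (h p)"] by (simp add: sums_iff)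
qed

section \<open>The adjoint of W\<close>

definition W_star :: "nat \<Rightarrow> (nat \<Rightarrow> complex) \<Rightarrow> nat \<Rightarrow> complex" where
  "W_star n g j = (\<Sum>r<n. g (n * j + r))"

lemma W_star_add: "W_star n (\<lambda>k. x k + y k) j = W_star n x j + W_star n y j"
  by (simp add: W_star_def sum.distrib)

lemma W_star_diff: "W_star n (\<lambda>k. x k - y k) j = W_star n x j - W_star n y j"
  by (simp add: W_star_def sum_subtractf)

lemma W_star_mult: "W_star n (\<lambda>k. c * x k) j = c * W_star n x j"
  by (simp add: W_star_def sum_distrib_left)

lemma W_star_unit_vec:
  assumes "0 < n"
  shows "W_star n (unit_vec p) j = unit_vec (p div n) j"
proof -
  have "n * j + r = p \<longleftrightarrow> r = p mod n \<and> j = p div n" if "r < n" for r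
  proof
    assume "n * j + r = p"
    then show "r = p mod n \<and> j = p div n" using that by auto
  next
    assume "r = p mod n \<and> j = p div n"
    then show "n * j + r = p" by simp
  qed
  then have "W_star n (unit_vec p) j = (\<Sum>r<n. if r = p mod n \<and> j = p div n then 1 else 0)"
    unfolding W_star_def unit_vec_def by (intro sum.cong) auto
  also have "\<dots> = unit_vec (p div n) j"
    using assms by (auto simp: unit_vec_def)
  finally show ?thesis .
qed

lemma sum_block:
  fixes n m :: nat
  shows "(\<Sum>r<n. h (n * m + r)) = sum h {m * n..<m * n + n}"
proof -
  have "sum h {m * n..<m * n + n} = sum h {0 + m * n..<n + m * n}" by (simp add: add.commute)
  also have "\<dots> = (\<Sum>r = 0..<n. h (r + m * n))" by (rule sum.shift_bounds_nat_ivl)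
  finally show ?thesis by (simp add: atLeast0LessThan add.commute mult.commute)
qed

lemma sum_blocks:
  fixes n N :: nat
  shows "(\<Sum>m<N. \<Sum>r<n. h (n * m + r)) = (\<Sum>k<N * n. h k)"
  using sum.nat_group[of h n N] by (simp add: sum_block)

lemma sum_div_sq_le:
  assumes "a \<in> H2" "0 < p"
  shows "(\<Sum>k<N. (cmod (a (k div p)))\<^sup>2) \<le> real p * (h2_norm a)\<^sup>2"
proof -
  have "(\<Sum>k<N. (cmod (a (k div p)))\<^sup>2) \<le> (\<Sum>k<N * p. (cmod (a (k div p)))\<^sup>2)"
    by (rule sum_mono2) (use assms in auto)
  also have "\<dots> = (\<Sum>m<N. \<Sum>r<p. (cmod (a ((p * m + r) div p)))\<^sup>2)"
    by (rule sum_blocks[symmetric])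
  also have "\<dots> = real p * (\<Sum>m<N. (cmod (a m))\<^sup>2)"
    using assms(2) by (simp add: sum_distrib_left)
  also have "\<dots> \<le> real p * (h2_norm a)\<^sup>2"
    by (rule mult_left_mono[OF sum_le_h2_norm_sq[OF assms(1)]]) simp
  finally show ?thesis .
qed

lemma H2_W: "f \<in> H2 \<Longrightarrow> 0 < n \<Longrightarrow> W n f \<in> H2"
  using H2_partial_sums_bound(1)[of "W n f" "sqrt (real n) * h2_norm f"] sum_div_sq_le[of f n]
  by (simp add: W_def power_mult_distrib h2_norm_nonneg)

lemma norm_sum_sq_le: "(cmod (\<Sum>r<n. z r))\<^sup>2 \<le> real n * (\<Sum>r<n. (cmod (z r))\<^sup>2)"
proof -
  have "(cmod (\<Sum>r<n. z r))\<^sup>2 \<le> (\<Sum>r<n. cmod (z r) * 1)\<^sup>2"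
    by (rule power_mono) (simp_all add: norm_sum)
  also have "\<dots> \<le> (\<Sum>r<n. (cmod (z r))\<^sup>2) * (\<Sum>r<n. 1\<^sup>2)"
    by (rule Cauchy_Schwarz_ineq_sum)
  finally show ?thesis by (simp add: mult.commute)
qed

lemma H2_W_star:
  assumes "g \<in> H2"
  shows "W_star n g \<in> H2"
proof -
  have "(\<Sum>j<N. (cmod (W_star n g j))\<^sup>2) \<le> (sqrt (real n) * h2_norm g)\<^sup>2" for N
  proof -
    have "(\<Sum>j<N. (cmod (W_star n g j))\<^sup>2) \<le> (\<Sum>j<N. real n * (\<Sum>r<n. (cmod (g (n * j + r)))\<^sup>2))"
      unfolding W_star_def by (rule sum_mono) (rule norm_sum_sq_le)
    also have "\<dots> = real n * (\<Sum>k<N * n. (cmod (g k))\<^sup>2)"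
      by (simp only: sum_distrib_left[symmetric] sum_blocks[of "\<lambda>k. (cmod (g k))\<^sup>2"])
    also have "\<dots> \<le> real n * (h2_norm g)\<^sup>2"
      by (rule mult_left_mono[OF sum_le_h2_norm_sq[OF assms]]) simp
    finally show ?thesis by (simp add: power_mult_distrib)
  qed
  then show ?thesis
    by (rule H2_partial_sums_bound(1)) (simp add: h2_norm_nonneg assms)
qed

lemma h2_inner_W:
  assumes "f \<in> H2" "g \<in> H2" "0 < n"
  shows "h2_inner (W n f) g = h2_inner f (W_star n g)"
proof -
  have "(\<lambda>j. \<Sum>k\<in>{j * n..<j * n + n}. W n f k * cnj (g k)) sums h2_inner (W n f) g"
    unfolding h2_inner_def
    using sums_group[OF summable_sums[OF summable_h2_inner[OF H2_W[OF assms(1,3)] assms(2)]] assms(3)] .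
  moreover have "(\<Sum>k\<in>{j * n..<j * n + n}. W n f k * cnj (g k)) = f j * cnj (W_star n g j)" for j
    using assms(3) by (simp add: sum_block[symmetric] W_def W_star_def sum_distrib_left)
  ultimately show ?thesis
    unfolding h2_inner_def[of f] by (simp add: sums_unique)
qed

lemma W_adj_eq_W_star:
  assumes "0 < n" "g \<in> H2"
  shows "W_adj n g = W_star n g"
  unfolding W_adj_def
proof (rule the_equality)
  show "W_star n g \<in> H2 \<and> (\<forall>f\<in>H2. h2_inner (W n f) g = h2_inner f (W_star n g))"
    using H2_W_star[OF assms(2)] h2_inner_W[OF _ assms(2,1)] by auto
next
  fix h assume h: "h \<in> H2 \<and> (\<forall>f\<in>H2. h2_inner (W n f) g = h2_inner f h)"
  show "h = W_star n g"
  proof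
    fix j
    have "cnj (h j) = h2_inner (W n (unit_vec j)) g"
      using h H2_unit_vec[of j] h2_inner_unit_vec[of j h] by auto
    also have "\<dots> = cnj (W_star n g j)"
      using h2_inner_W[OF H2_unit_vec assms(2,1)] h2_inner_unit_vec by simp
    finally show "h j = W_star n g j" by simp
  qed
qed

lemma eigsp_iff:
  assumes "0 < n"
  shows "v \<in> eigsp n lam \<longleftrightarrow> v \<in> H2 \<and> (\<forall>j. W_star n v j = lam * v j)"
  using W_adj_eq_W_star[OF assms] by (auto simp: eigsp_def)

section \<open>Dilations\<close>

definition dilate :: "nat \<Rightarrow> nat \<Rightarrow> (nat \<Rightarrow> complex) \<Rightarrow> nat \<Rightarrow> complex" where
  "dilate n d a k = a (k div n ^ d) / of_nat (n ^ d)"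

lemma dilate_0 [simp]: "dilate n 0 a = a"
  by (simp add: dilate_def fun_eq_iff)

lemma dilate_diff: "dilate n d (\<lambda>k. x k - y k) k = dilate n d x k - dilate n d y k"
  by (simp add: dilate_def diff_divide_distrib)

lemma dilate_dilate: "dilate n d (dilate n e b) = dilate n (d + e) b"
proof
  fix k
  have "k div n ^ d div n ^ e = k div n ^ (d + e)" by (simp add: div_mult2_eq power_add)
  then show "dilate n d (dilate n e b) k = dilate n (d + e) b k" by (simp add: dilate_def power_add)
qed

lemma dilate_eq_0: "a 0 = 0 \<Longrightarrow> k < n ^ d \<Longrightarrow> dilate n d a k = 0"
  by (simp add: dilate_def)

lemma W_star_dilate_Suc:
  assumes "0 < n"
  shows "W_star n (dilate n (Suc d) a) j = dilate n d a j"
proof -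
  have "(n * j + r) div n ^ Suc d = j div n ^ d" if "r < n" for r
    using that by (simp add: div_mult2_eq)
  then have "W_star n (dilate n (Suc d) a) j = (\<Sum>r<n. a (j div n ^ d) / of_nat (n ^ Suc d))"
    unfolding W_star_def dilate_def by (intro sum.cong) auto
  also have "\<dots> = dilate n d a j"
    using assms by (simp add: dilate_def)
  finally show ?thesis .
qed

lemma sum_dilate_sq_le:
  assumes "a \<in> H2" "0 < n"
  shows "(\<Sum>k<N. (cmod (dilate n d a k))\<^sup>2) \<le> (h2_norm a)\<^sup>2 / real n ^ d"
proof -
  have "(\<Sum>k<N. (cmod (dilate n d a k))\<^sup>2) = (\<Sum>k<N. (cmod (a (k div n ^ d)))\<^sup>2) / (real n ^ d)\<^sup>2"
    by (simp add: dilate_def norm_divide sum_divide_distrib power_divide norm_power)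
  also have "\<dots> \<le> (real (n ^ d) * (h2_norm a)\<^sup>2) / (real n ^ d)\<^sup>2"
    by (rule divide_right_mono[OF sum_div_sq_le[OF assms(1)]]) (use assms(2) in simp_all)
  also have "\<dots> = (h2_norm a)\<^sup>2 / real n ^ d"
    using assms(2) by (simp add: power2_eq_square)
  finally show ?thesis .
qed

text \<open>The truncation d \<le> k is harmless: if a 0 = 0 and n \<ge> 2 then dilate n d a k = 0 for d > k,
  since k < n ^ d (see dilation_series_eq_sum).\<close>
definition dilation_series :: "nat \<Rightarrow> (nat \<Rightarrow> complex) \<Rightarrow> (nat \<Rightarrow> complex) \<Rightarrow> nat \<Rightarrow> complex" where
  "dilation_series n \<gamma> a k = (\<Sum>d\<le>k. \<gamma> d * dilate n d a k)"

lemma dilation_series_eq_sum: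
  assumes "2 \<le> n" "a 0 = 0" "k \<le> N"
  shows "dilation_series n \<gamma> a k = (\<Sum>d\<le>N. \<gamma> d * dilate n d a k)"
proof -
  have "dilate n d a k = 0" if "k < d" for d
  proof (rule dilate_eq_0[where a=a, OF assms(2)])
    have "d < 2 ^ d" by (rule less_exp)
    also have "\<dots> \<le> n ^ d" by (rule power_mono) (use assms(1) in auto)
    finally show "k < n ^ d" using that by simp
  qed
  then show ?thesis
    unfolding dilation_series_def by (intro sum.mono_neutral_left) (use assms(3) in auto)
qed

lemma dilation_series_unit_vec:
  assumes "2 \<le> n" "a 0 = 0"
  shows "dilation_series n (unit_vec e) a k = dilate n e a k"
  using dilation_series_eq_sum[where a=a, OF assms, of k "max k e" "unit_vec e"]
  by (simp add: unit_vec_mult)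

lemma dilation_series_sum:
  "dilation_series n (\<lambda>d. \<Sum>i\<in>I. c i * \<gamma> i d) a k = (\<Sum>i\<in>I. c i * dilation_series n (\<gamma> i) a k)"
  by (simp add: dilation_series_def sum_distrib_left sum_distrib_right mult.assoc sum.swap[of _ I])

lemma dilation_series_mult:
  "dilation_series n (\<lambda>d. c * \<gamma> d) a k = c * dilation_series n \<gamma> a k"
  by (simp add: dilation_series_def sum_distrib_left mult.assoc)

lemma dilation_series_diff:
  "dilation_series n (\<lambda>d. \<gamma> d - \<gamma>' d) a k = dilation_series n \<gamma> a k - dilation_series n \<gamma>' a k"
  by (simp add: dilation_series_def left_diff_distrib sum_subtractf)

lemma W_star_dilation_series:
  assumes "2 \<le> n" "a 0 = 0"
  shows "W_star n (dilation_series n \<gamma> a) j = \<gamma> 0 * W_star n a j + dilation_series n (\<lambda>d. \<gamma> (Suc d)) a j"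
proof -
  define N where "N = n * j + n"
  have "j \<le> N" using assms(1) by (simp add: N_def trans_le_add1)
  have "W_star n (dilation_series n \<gamma> a) j = (\<Sum>r<n. \<Sum>d\<le>Suc N. \<gamma> d * dilate n d a (n * j + r))"
    unfolding W_star_def by (intro sum.cong refl dilation_series_eq_sum[where a=a, OF assms]) (auto simp: N_def)
  also have "\<dots> = (\<Sum>d\<le>Suc N. \<gamma> d * W_star n (dilate n d a) j)"
    by (simp add: W_star_def sum_distrib_left sum.swap[of _ "{..<n}"])
  also have "\<dots> = \<gamma> 0 * W_star n a j + (\<Sum>d\<le>N. \<gamma> (Suc d) * dilate n d a j)"
    using assms(1) by (simp add: sum.atMost_Suc_shift W_star_dilate_Suc del: sum.atMost_Suc)
  also have "\<dots> = \<gamma> 0 * W_star n a j + dilation_series n (\<lambda>d. \<gamma> (Suc d)) a j"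
    using dilation_series_eq_sum[where a=a, OF assms \<open>j \<le> N\<close>] by simp
  finally show ?thesis .
qed

definition block_supported :: "nat \<Rightarrow> (nat \<Rightarrow> complex) \<Rightarrow> bool" where
  "block_supported n a \<longleftrightarrow> (\<exists>L\<ge>1. \<forall>k. a k \<noteq> 0 \<longrightarrow> L \<le> k \<and> k < n * L)"

lemma block_supported_H2: "block_supported n a \<Longrightarrow> a \<in> H2"
  unfolding block_supported_def by (metis H2_finite_support not_le)

lemma block_supported_0: "block_supported n a \<Longrightarrow> a 0 = 0"
  unfolding block_supported_def by auto

lemma dilate_nonzero_unique:
  assumes "block_supported n a" "2 \<le> n" "dilate n d a k \<noteq> 0" "dilate n d' a k \<noteq> 0"
  shows "d = d'"
proof -
  obtain L where L: "\<And>k. a k \<noteq> 0 \<Longrightarrow> L \<le> k \<and> k < n * L"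
    using assms(1) unfolding block_supported_def by blast
  have range: "n ^ e * L \<le> k \<and> k < n ^ Suc e * L" if "dilate n e a k \<noteq> 0" for e
  proof -
    have "L \<le> k div n ^ e" "k div n ^ e < n * L"
      using L[of "k div n ^ e"] that by (auto simp: dilate_def)
    moreover have "0 < n ^ e" using assms(2) by simp
    ultimately show ?thesis
      by (simp add: less_eq_div_iff_mult_less_eq div_less_iff_less_mult mult.commute mult.left_commute)
  qed
  have "n ^ Suc e * L \<le> n ^ e' * L" if "e < e'" for e e'
    using that assms(2) by (intro mult_right_mono power_increasing) auto
  then show ?thesis
    using range[OF assms(3)] range[OF assms(4)] by (meson linorder_neqE_nat order.strict_trans2 not_le)
qed

lemma norm_sum_sq_le_if_single_nonzero:
  fixes f :: "'a \<Rightarrow> 'b::real_normed_vector"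
  assumes "finite S" "\<And>d d'. d \<in> S \<Longrightarrow> d' \<in> S \<Longrightarrow> f d \<noteq> 0 \<Longrightarrow> f d' \<noteq> 0 \<Longrightarrow> d = d'"
  shows "(norm (sum f S))\<^sup>2 \<le> (\<Sum>d\<in>S. (norm (f d))\<^sup>2)"
proof (cases "\<exists>d\<in>S. f d \<noteq> 0")
  case False
  then show ?thesis by (simp add: sum_nonneg)
next
  case True
  then obtain d where d: "d \<in> S" "f d \<noteq> 0" by auto
  have "sum f S = f d + sum f (S - {d})" by (rule sum.remove[OF assms(1) d(1)])
  also have "sum f (S - {d}) = 0" using assms(2) d by (intro sum.neutral) blast
  finally have "sum f S = f d" by simp
  moreover have "(norm (f d))\<^sup>2 \<le> (\<Sum>d\<in>S. (norm (f d))\<^sup>2)"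
    by (rule member_le_sum) (use assms d in auto)
  ultimately show ?thesis by simp
qed

lemma dilation_series_bound:
  assumes a: "block_supported n a" and n: "2 \<le> n"
    and K: "\<And>N. (\<Sum>d<N. (cmod (\<gamma> d))\<^sup>2 / real n ^ d) \<le> K"
  shows "dilation_series n \<gamma> a \<in> H2" "h2_norm (dilation_series n \<gamma> a) \<le> sqrt K * h2_norm a"
proof -
  have aH: "a \<in> H2" by (rule block_supported_H2[OF a])
  have "0 \<le> K" using K[of 0] by simp
  have "(\<Sum>k<N. (cmod (dilation_series n \<gamma> a k))\<^sup>2) \<le> (sqrt K * h2_norm a)\<^sup>2" for N
  proof -
    have "(\<Sum>k<N. (cmod (dilation_series n \<gamma> a k))\<^sup>2)
        \<le> (\<Sum>k<N. \<Sum>d\<le>k. (cmod (\<gamma> d * dilate n d a k))\<^sup>2)"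
      unfolding dilation_series_def
      by (intro sum_mono norm_sum_sq_le_if_single_nonzero) (auto intro: dilate_nonzero_unique[OF a n])
    also have "\<dots> \<le> (\<Sum>k<N. \<Sum>d<N. (cmod (\<gamma> d * dilate n d a k))\<^sup>2)"
      by (intro sum_mono sum_mono2) auto
    also have "\<dots> = (\<Sum>d<N. (cmod (\<gamma> d))\<^sup>2 * (\<Sum>k<N. (cmod (dilate n d a k))\<^sup>2))"
      by (subst sum.swap) (simp add: norm_mult power_mult_distrib sum_distrib_left)
    also have "\<dots> \<le> (\<Sum>d<N. (cmod (\<gamma> d))\<^sup>2 * ((h2_norm a)\<^sup>2 / real n ^ d))"
      using n by (intro sum_mono mult_left_mono sum_dilate_sq_le[OF aH]) auto
    also have "\<dots> = (\<Sum>d<N. (cmod (\<gamma> d))\<^sup>2 / real n ^ d) * (h2_norm a)\<^sup>2"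
      by (simp add: sum_distrib_right)
    also have "\<dots> \<le> K * (h2_norm a)\<^sup>2"
      by (rule mult_right_mono[OF K]) simp
    finally show ?thesis
      using \<open>0 \<le> K\<close> by (simp add: power_mult_distrib)
  qed
  moreover have "0 \<le> sqrt K * h2_norm a"
    using h2_norm_nonneg[OF aH] \<open>0 \<le> K\<close> by simp
  ultimately show "dilation_series n \<gamma> a \<in> H2" "h2_norm (dilation_series n \<gamma> a) \<le> sqrt K * h2_norm a"
    by (rule H2_partial_sums_bound)+
qed

lemma inverse_power_le_half_power: "2 \<le> n \<Longrightarrow> 1 / real n ^ d \<le> (1/2) ^ d"
  using power_mono[of 2 "real n" d] by (simp add: power_one_over frac_le)

lemma weighted_sum_le_tail:
  assumes n: "2 \<le> n" and B: "\<And>d. cmod (\<gamma> d) \<le> B" and D: "\<And>d. d < D \<Longrightarrow> \<gamma> d = 0"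
  shows "(\<Sum>d<N. (cmod (\<gamma> d))\<^sup>2 / real n ^ d) \<le> 2 * B\<^sup>2 * (1/2) ^ D"
proof -
  define g where "g d = (if d < D then 0 else B\<^sup>2 * (1/2::real) ^ d)" for d
  have "(cmod (\<gamma> d))\<^sup>2 / real n ^ d \<le> g d" for d
  proof (cases "d < D")
    case False
    have "(cmod (\<gamma> d))\<^sup>2 * (1 / real n ^ d) \<le> B\<^sup>2 * (1/2) ^ d"
      using inverse_power_le_half_power[OF n] by (intro mult_mono power_mono[OF B]) auto
    then show ?thesis using False by (simp add: g_def)
  qed (simp add: D g_def)
  then have "(\<Sum>d<N. (cmod (\<gamma> d))\<^sup>2 / real n ^ d) \<le> (\<Sum>d<N. g d)"
    by (rule sum_mono)
  also have "\<dots> \<le> 2 * B\<^sup>2 * (1/2) ^ D"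
  proof (rule sum_le_sums_nonneg)
    have "(\<lambda>i. B\<^sup>2 * (1/2) ^ D * (1/2::real) ^ i) sums (B\<^sup>2 * (1/2) ^ D * (1 / (1 - 1/2)))"
      by (intro sums_mult geometric_sums) simp
    then have "(\<lambda>i. g (i + D)) sums (2 * B\<^sup>2 * (1/2) ^ D)"
      by (simp add: g_def power_add mult_ac)
    then show "g sums (2 * B\<^sup>2 * (1/2) ^ D)"
      by (subst (asm) sums_zero_iff_shift) (simp_all add: g_def)
  qed (simp add: g_def)
  finally show ?thesis .
qed

lemma weighted_sum_le_linear:
  assumes n: "2 \<le> n" and \<gamma>: "\<And>d. (cmod (\<gamma> d))\<^sup>2 \<le> c * real (Suc d)"
  shows "(\<Sum>d<N. (cmod (\<gamma> d))\<^sup>2 / real n ^ d) \<le> 4 * c"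
proof -
  have "0 \<le> c" using \<gamma>[of 0] order_trans[OF zero_le_power2] by fastforce
  have "(cmod (\<gamma> d))\<^sup>2 / real n ^ d \<le> c * (real (Suc d) * (1/2) ^ d)" for d
  proof -
    have "(cmod (\<gamma> d))\<^sup>2 * (1 / real n ^ d) \<le> (c * real (Suc d)) * (1/2) ^ d"
      using inverse_power_le_half_power[OF n] by (intro mult_mono \<gamma>) (use \<open>0 \<le> c\<close> in auto)
    then show ?thesis by simp
  qed
  then have "(\<Sum>d<N. (cmod (\<gamma> d))\<^sup>2 / real n ^ d) \<le> (\<Sum>d<N. c * (real (Suc d) * (1/2) ^ d))"
    by (rule sum_mono)
  also have "\<dots> \<le> c * 4"
  proof (rule sum_le_sums_nonneg)
    have "(\<lambda>d. real (Suc d) * (1/2) ^ d) sums 4"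
      using geometric_deriv_sums[of "1/2::real"] by (simp add: power2_eq_square)
    then show "(\<lambda>d. c * (real (Suc d) * (1/2) ^ d)) sums (c * 4)"
      by (rule sums_mult)
  qed (use \<open>0 \<le> c\<close> in simp)
  finally show ?thesis by simp
qed

section \<open>Eigenvectors of the adjoint\<close>

lemma norm_power_Suc_diff_le: "cmod lam \<le> 1 \<Longrightarrow> cmod (lam ^ Suc d - lam ^ d) \<le> 2"
  using norm_triangle_ineq4[of "lam ^ Suc d" "lam ^ d"]
    power_le_one[OF norm_ge_zero, of lam "Suc d"] power_le_one[OF norm_ge_zero, of lam d]
  by (simp add: norm_power del: power_Suc)

definition W_star_seed :: "nat \<Rightarrow> (nat \<Rightarrow> complex) \<Rightarrow> complex \<Rightarrow> bool" where
  "W_star_seed n a \<mu> \<longleftrightarrow> block_supported n a \<and> (\<forall>j. W_star n a j = \<mu> * unit_vec 0 j)"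

definition eigvec :: "nat \<Rightarrow> complex \<Rightarrow> (nat \<Rightarrow> complex) \<Rightarrow> complex \<Rightarrow> nat \<Rightarrow> complex" where
  "eigvec n \<mu> a lam k = \<mu> * unit_vec 0 k + dilation_series n (\<lambda>d. lam ^ Suc d - lam ^ d) a k"

lemma eigvec_1: "eigvec n \<mu> a 1 = (\<lambda>k. \<mu> * unit_vec 0 k)"
  by (simp add: eigvec_def dilation_series_def fun_eq_iff)

lemma eigvec_in_eigsp:
  assumes seed: "W_star_seed n a \<mu>" and n: "2 \<le> n" and lam: "cmod lam \<le> 1"
  shows "eigvec n \<mu> a lam \<in> eigsp n lam"
proof -
  have a: "block_supported n a" and Wa: "\<And>j. W_star n a j = \<mu> * unit_vec 0 j"
    using seed by (auto simp: W_star_seed_def)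
  have a0: "a 0 = 0" by (rule block_supported_0[OF a])
  have "dilation_series n (\<lambda>d. lam ^ Suc d - lam ^ d) a \<in> H2"
    by (rule dilation_series_bound(1)[OF a n weighted_sum_le_tail[where D=0, OF n norm_power_Suc_diff_le[OF lam]]])
      simp
  then have H2: "eigvec n \<mu> a lam \<in> H2"
    using h2_add(1)[OF h2_scale(1)[OF H2_unit_vec]] by (simp add: eigvec_def[abs_def])
  have "W_star n (eigvec n \<mu> a lam) j = lam * eigvec n \<mu> a lam j" for j
  proof -
    have "W_star n (eigvec n \<mu> a lam) j
        = \<mu> * unit_vec 0 j + (lam - 1) * (\<mu> * unit_vec 0 j)
          + dilation_series n (\<lambda>d. lam * (lam ^ Suc d - lam ^ d)) a j"
      using n by (simp add: eigvec_def[abs_def] W_star_add W_star_mult W_star_unit_vec Wa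
          W_star_dilation_series[where a=a, OF n a0] algebra_simps)
    also have "\<dots> = lam * eigvec n \<mu> a lam j"
      by (simp add: dilation_series_mult[symmetric] eigvec_def algebra_simps)
    finally show ?thesis .
  qed
  with H2 show ?thesis
    using n by (simp add: eigsp_iff)
qed

lemma h2_norm_eigvec_diff_le:
  assumes a: "block_supported n a" and n: "2 \<le> n" and lam: "cmod lam \<le> 1" "cmod lam' \<le> 1"
  shows "h2_norm (\<lambda>k. eigvec n \<mu> a lam' k - eigvec n \<mu> a lam k)
    \<le> sqrt (32 * cmod (lam' - lam)) * h2_norm a"
proof -
  define \<gamma> where "\<gamma> d = (lam' ^ Suc d - lam' ^ d) - (lam ^ Suc d - lam ^ d)" for d
  have "(cmod (\<gamma> d))\<^sup>2 \<le> 8 * cmod (lam' - lam) * real (Suc d)" for d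
  proof -
    have pow: "cmod (lam' ^ m - lam ^ m) \<le> real m * cmod (lam' - lam)" for m
      by (rule norm_power_diff) (use lam in auto)
    have "cmod (\<gamma> d) \<le> cmod (lam' ^ Suc d - lam ^ Suc d) + cmod (lam' ^ d - lam ^ d)"
      unfolding \<gamma>_def by (rule order_trans[OF _ norm_triangle_ineq4]) (simp add: algebra_simps)
    moreover have "real d * cmod (lam' - lam) \<le> real (Suc d) * cmod (lam' - lam)"
      by (rule mult_right_mono) auto
    ultimately have small: "cmod (\<gamma> d) \<le> 2 * (real (Suc d) * cmod (lam' - lam))"
      using pow[of "Suc d"] pow[of d] by linarith
    have bounded: "cmod (\<gamma> d) \<le> 4"
      using norm_triangle_ineq4[of "lam' ^ Suc d - lam' ^ d" "lam ^ Suc d - lam ^ d"]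
        norm_power_Suc_diff_le[OF lam(1), of d] norm_power_Suc_diff_le[OF lam(2), of d]
      unfolding \<gamma>_def by linarith
    have "(cmod (\<gamma> d))\<^sup>2 \<le> 4 * (2 * (real (Suc d) * cmod (lam' - lam)))"
      unfolding power2_eq_square by (rule mult_mono[OF bounded small]) auto
    then show ?thesis by (simp add: algebra_simps)
  qed
  then have "h2_norm (dilation_series n \<gamma> a) \<le> sqrt (4 * (8 * cmod (lam' - lam))) * h2_norm a"
    by (intro dilation_series_bound(2)[OF a n] weighted_sum_le_linear[OF n]) auto
  moreover have "(\<lambda>k. eigvec n \<mu> a lam' k - eigvec n \<mu> a lam k) = dilation_series n \<gamma> a"
    unfolding \<gamma>_def eigvec_def
    by (simp add: dilation_series_diff[of n "\<lambda>d. lam' ^ Suc d - lam' ^ d", symmetric] del: power_Suc)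
  ultimately show ?thesis by simp
qed

section \<open>Closed linear spans\<close>

inductive_set lin_combs :: "(nat \<Rightarrow> complex) set \<Rightarrow> (nat \<Rightarrow> complex) set" for V where
  zero: "(\<lambda>k. 0) \<in> lin_combs V"
| add_scaled: "v \<in> V \<Longrightarrow> y \<in> lin_combs V \<Longrightarrow> (\<lambda>k. c * v k + y k) \<in> lin_combs V"

lemma lin_combs_H2:
  assumes "V \<subseteq> H2" "y \<in> lin_combs V"
  shows "y \<in> H2"
  using assms(2)
proof induction
  case (add_scaled v y c)
  then show ?case using h2_add(1)[OF h2_scale(1)] assms(1) by blast
qed (rule H2_zero)

lemma lin_combs_add:
  assumes "x \<in> lin_combs V" "y \<in> lin_combs V"
  shows "(\<lambda>k. x k + y k) \<in> lin_combs V"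
  using assms(1)
proof induction
  case (add_scaled v x c)
  have "(\<lambda>k. c * v k + x k + y k) = (\<lambda>k. c * v k + (x k + y k))" by (simp add: add.assoc)
  then show ?case using lin_combs.add_scaled[OF add_scaled.hyps(1) add_scaled.IH] by simp
qed (simp add: assms(2))

lemma lin_combs_mult: "x \<in> lin_combs V \<Longrightarrow> (\<lambda>k. b * x k) \<in> lin_combs V"
proof (induction x rule: lin_combs.induct)
  case (add_scaled v y c)
  then show ?case
    using lin_combs.add_scaled[OF add_scaled.hyps(1) add_scaled.IH, of "b * c"] by (simp add: algebra_simps)
qed (simp add: lin_combs.zero)

lemma lin_combs_UN_finite_sum:
  assumes "y \<in> lin_combs (\<Union>x\<in>X. E x)"
  shows "\<exists>(N::nat) c v x. (\<forall>i<N. x i \<in> X \<and> v i \<in> E (x i)) \<and> y = (\<lambda>k. \<Sum>i<N. c i * v i k)"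
  using assms
proof (induction rule: lin_combs.induct)
  case zero
  show ?case by (rule exI[of _ 0]) auto
next
  case (add_scaled v0 y c0)
  then obtain x0 where x0: "x0 \<in> X" "v0 \<in> E x0" by blast
  obtain N :: nat and c v x where N: "\<forall>i<N. x i \<in> X \<and> v i \<in> E (x i)" "y = (\<lambda>k. \<Sum>i<N. c i * v i k)"
    using add_scaled.IH by blast
  have "(\<lambda>k. c0 * v0 k + y k) = (\<lambda>k. \<Sum>i<Suc N. (c(N := c0)) i * (v(N := v0)) i k)"
    using N(2) by (simp add: add.commute)
  moreover have "\<forall>i<Suc N. (x(N := x0)) i \<in> X \<and> (v(N := v0)) i \<in> E ((x(N := x0)) i)"
    using N(1) x0 by (simp add: less_Suc_eq)
  ultimately show ?case by blast
qed

definition closed_span :: "(nat \<Rightarrow> complex) set \<Rightarrow> (nat \<Rightarrow> complex) set" where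
  "closed_span V = {x \<in> H2. \<forall>\<epsilon>>0. \<exists>y\<in>lin_combs V. h2_norm (\<lambda>k. x k - y k) < \<epsilon>}"

lemma closed_span_H2: "x \<in> closed_span V \<Longrightarrow> x \<in> H2"
  by (simp add: closed_span_def)

lemma lin_combs_subset_closed_span:
  assumes "V \<subseteq> H2"
  shows "lin_combs V \<subseteq> closed_span V"
proof
  fix y assume y: "y \<in> lin_combs V"
  have "h2_norm (\<lambda>k. y k - y k) = 0" by (simp add: h2_norm_zero)
  then show "y \<in> closed_span V"
    unfolding closed_span_def using lin_combs_H2[OF assms y] y
    by (intro CollectI conjI allI impI bexI[of _ y]) simp_all
qed

lemma subset_closed_span: "V \<subseteq> H2 \<Longrightarrow> V \<subseteq> closed_span V"
  using lin_combs.add_scaled[OF _ lin_combs.zero, of _ V 1] lin_combs_subset_closed_span by auto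

lemma closed_span_approx:
  assumes "V \<subseteq> H2" "x \<in> H2" "\<And>\<epsilon>. \<epsilon> > 0 \<Longrightarrow> \<exists>z\<in>closed_span V. h2_norm (\<lambda>k. x k - z k) < \<epsilon>"
  shows "x \<in> closed_span V"
  unfolding closed_span_def
proof (intro CollectI conjI assms(2) allI impI)
  fix \<epsilon> :: real assume "\<epsilon> > 0"
  then obtain z where z: "z \<in> closed_span V" "h2_norm (\<lambda>k. x k - z k) < \<epsilon>/2"
    using assms(3)[of "\<epsilon>/2"] by auto
  moreover have "\<epsilon>/2 > 0" using \<open>\<epsilon> > 0\<close> by simp
  ultimately obtain y where y: "y \<in> lin_combs V" "h2_norm (\<lambda>k. z k - y k) < \<epsilon>/2"
    unfolding closed_span_def by blast
  have "z \<in> H2" "y \<in> H2" using z(1) y(1) lin_combs_H2[OF assms(1)] by (auto simp: closed_span_def)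
  have "h2_norm (\<lambda>k. x k - y k) = h2_norm (\<lambda>k. (x k - z k) + (z k - y k))" by simp
  also have "\<dots> \<le> h2_norm (\<lambda>k. x k - z k) + h2_norm (\<lambda>k. z k - y k)"
    by (rule h2_add(2)[OF H2_diff[OF assms(2) \<open>z \<in> H2\<close>] H2_diff[OF \<open>z \<in> H2\<close> \<open>y \<in> H2\<close>]])
  finally show "\<exists>y\<in>lin_combs V. h2_norm (\<lambda>k. x k - y k) < \<epsilon>" using y z by (intro bexI[of _ y]) auto
qed

lemma closed_span_add:
  assumes "V \<subseteq> H2" "x \<in> closed_span V" "x' \<in> closed_span V"
  shows "(\<lambda>k. x k + x' k) \<in> closed_span V"
  unfolding closed_span_def
proof (intro CollectI conjI allI impI)
  have "x \<in> H2" "x' \<in> H2" using assms(2,3) by (simp_all add: closed_span_H2)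
  then show "(\<lambda>k. x k + x' k) \<in> H2" by (rule h2_add(1))
  fix \<epsilon> :: real assume "\<epsilon> > 0"
  then have "\<epsilon>/2 > 0" by simp
  then obtain y y' where y: "y \<in> lin_combs V" "h2_norm (\<lambda>k. x k - y k) < \<epsilon>/2"
    and y': "y' \<in> lin_combs V" "h2_norm (\<lambda>k. x' k - y' k) < \<epsilon>/2"
    using assms(2,3) unfolding closed_span_def by blast
  have "y \<in> H2" "y' \<in> H2" using y(1) y'(1) lin_combs_H2[OF assms(1)] by auto
  have "h2_norm (\<lambda>k. x k + x' k - (y k + y' k)) = h2_norm (\<lambda>k. (x k - y k) + (x' k - y' k))"
    by (simp add: algebra_simps)
  also have "\<dots> \<le> h2_norm (\<lambda>k. x k - y k) + h2_norm (\<lambda>k. x' k - y' k)"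
    by (rule h2_add(2)[OF H2_diff[OF \<open>x \<in> H2\<close> \<open>y \<in> H2\<close>] H2_diff[OF \<open>x' \<in> H2\<close> \<open>y' \<in> H2\<close>]])
  finally show "\<exists>y\<in>lin_combs V. h2_norm (\<lambda>k. x k + x' k - y k) < \<epsilon>"
    using y y' lin_combs_add[OF y(1) y'(1)] by (intro bexI[of _ "\<lambda>k. y k + y' k"]) auto
qed

lemma closed_span_mult:
  assumes "V \<subseteq> H2" "x \<in> closed_span V"
  shows "(\<lambda>k. b * x k) \<in> closed_span V"
  unfolding closed_span_def
proof (intro CollectI conjI allI impI)
  have "x \<in> H2" using assms(2) by (rule closed_span_H2)
  then show "(\<lambda>k. b * x k) \<in> H2" by (rule h2_scale(1))
  fix \<epsilon> :: real assume "\<epsilon> > 0"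
  then have "\<epsilon> / (cmod b + 1) > 0" by (simp add: add_nonneg_pos)
  then obtain y where y: "y \<in> lin_combs V" "h2_norm (\<lambda>k. x k - y k) < \<epsilon> / (cmod b + 1)"
    using assms(2) unfolding closed_span_def by blast
  have diff: "(\<lambda>k. x k - y k) \<in> H2" using \<open>x \<in> H2\<close> lin_combs_H2[OF assms(1) y(1)] by (rule H2_diff)
  have "h2_norm (\<lambda>k. b * x k - b * y k) = h2_norm (\<lambda>k. b * (x k - y k))"
    by (simp add: algebra_simps)
  also have "\<dots> \<le> cmod b * h2_norm (\<lambda>k. x k - y k)" by (rule h2_scale(2)[OF diff])
  also have "\<dots> \<le> (cmod b + 1) * h2_norm (\<lambda>k. x k - y k)"
    by (rule mult_right_mono) (auto simp: h2_norm_nonneg[OF diff])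
  also have "\<dots> < (cmod b + 1) * (\<epsilon> / (cmod b + 1))"
    by (rule mult_strict_left_mono[OF y(2)]) (simp add: add_nonneg_pos)
  also have "\<dots> = \<epsilon>"
    using norm_ge_zero[of b] by (simp add: add_nonneg_eq_0_iff)
  finally show "\<exists>y\<in>lin_combs V. h2_norm (\<lambda>k. b * x k - y k) < \<epsilon>"
    using lin_combs_mult[OF y(1), of b] by (intro bexI[of _ "\<lambda>k. b * y k"]) auto
qed

lemma closed_span_diff:
  assumes "V \<subseteq> H2" "x \<in> closed_span V" "x' \<in> closed_span V"
  shows "(\<lambda>k. x k - x' k) \<in> closed_span V"
proof -
  have "(\<lambda>k. x k + (-1) * x' k) \<in> closed_span V"
    by (rule closed_span_add[OF assms(1,2) closed_span_mult[OF assms(1,3)]])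
  then show ?thesis by simp
qed

lemma closed_span_sum:
  assumes "V \<subseteq> H2" "\<And>i. i \<in> I \<Longrightarrow> f i \<in> closed_span V" "finite I"
  shows "(\<lambda>k. \<Sum>i\<in>I. f i k) \<in> closed_span V"
  using assms(3,2)
proof (induction I rule: finite_induct)
  case empty
  then show ?case using lin_combs_subset_closed_span[OF assms(1)] lin_combs.zero by auto
next
  case (insert i I)
  then show ?case using closed_span_add[OF assms(1), of "f i" "\<lambda>k. \<Sum>i\<in>I. f i k"] by simp
qed

section \<open>Density of sets of full measure\<close>

lemma measure_lebesgue_Ico: "l \<le> u \<Longrightarrow> measure lebesgue {l..<u::real} = u - l"
  by (subst measure_completion) auto

lemma fmeasurable_Ico: "{l..<u::real} \<in> fmeasurable lebesgue"
proof (rule fmeasurableI2)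
  show "{l..u} \<in> fmeasurable lebesgue"
    using lmeasurable_cbox[of l u] by simp
  show "{l..<u} \<in> sets lebesgue"
    using sets_completionI_sets[of "{l..<u}" lborel] by simp
qed auto

lemma circle_param_meets_interval:
  assumes "circle_measurable A" "circle_measure A = 1" "0 \<le> t0" "t0 < 1" "0 < s"
  shows "\<exists>t\<in>circle_param A. t0 \<le> t \<and> t < t0 + s"
proof (rule ccontr)
  assume no_point: "\<not> ?thesis"
  define u where "u = min 1 (t0 + s)"
  have "t0 < u" using assms by (simp add: u_def)
  let ?C = "circle_param A" and ?I = "{t0..<u}"
  have disjoint: "?C \<inter> ?I = {}" using no_point by (auto simp: u_def)
  have "?C \<subseteq> {0..<1}" "?I \<subseteq> {0..<1}" using assms by (auto simp: circle_param_def u_def)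
  have "?C \<in> sets lebesgue" using assms(1) by (simp add: circle_measurable_def)
  then have C: "?C \<in> fmeasurable lebesgue"
    by (rule fmeasurableI2[OF fmeasurable_Ico \<open>?C \<subseteq> {0..<1}\<close>])
  have "measure lebesgue (?C \<union> ?I) = measure lebesgue ?C + measure lebesgue ?I"
    using measure_Un2[OF C fmeasurable_Ico] disjoint by (simp add: Diff_triv Int_commute)
  also have "\<dots> = 1 + (u - t0)"
    using assms(2) \<open>t0 < u\<close> by (simp add: circle_measure_def measure_lebesgue_Ico)
  finally have "measure lebesgue (?C \<union> ?I) = 1 + (u - t0)" .
  moreover have "measure lebesgue (?C \<union> ?I) \<le> measure lebesgue {0..<1::real}"
    using \<open>?C \<subseteq> {0..<1}\<close> \<open>?I \<subseteq> {0..<1}\<close> C fmeasurable_Ico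
    by (intro measure_mono_fmeasurable) auto
  ultimately show False using \<open>t0 < u\<close> by (simp add: measure_lebesgue_Ico)
qed

lemma full_measure_dense_in_circle:
  assumes "circle_measurable A" "circle_measure A = 1" "cmod z = 1" "0 < r"
  shows "\<exists>lam\<in>A. cmod lam = 1 \<and> cmod (lam - z) < r"
proof -
  define t0 where "t0 = frac (Arg z / (2 * pi))"
  have t0: "0 \<le> t0" "t0 < 1" by (simp_all add: t0_def frac_lt_1)
  have "2 * pi * t0 = Arg z + 2 * pi * (- of_int \<lfloor>Arg z / (2 * pi)\<rfloor>)"
    by (simp add: t0_def frac_def algebra_simps)
  then have "cis (2 * pi * t0) = cis (Arg z) * cis (2 * pi * (- of_int \<lfloor>Arg z / (2 * pi)\<rfloor>))"
    by (simp add: cis_mult)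
  also have "cis (2 * pi * (- of_int \<lfloor>Arg z / (2 * pi)\<rfloor>)) = 1"
    by (rule cis_multiple_2pi) simp
  also have "cis (Arg z) = z"
    using cis_Arg[of z] assms(3) by (cases "z = 0") (auto simp: sgn_div_norm)
  finally have z: "cis (2 * pi * t0) = z" by simp
  have "((\<lambda>t::real. cis (2 * pi * t)) \<longlongrightarrow> cis (2 * pi * t0)) (at t0)" by (intro tendsto_intros)
  from LIM_D[OF this assms(4)] obtain s where s: "s > 0"
    "\<And>t. t \<noteq> t0 \<and> norm (t - t0) < s \<Longrightarrow> cmod (cis (2 * pi * t) - cis (2 * pi * t0)) < r"
    by blast
  obtain t where t: "t \<in> circle_param A" "t0 \<le> t" "t < t0 + s"
    using circle_param_meets_interval[OF assms(1,2) t0 s(1)] by auto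
  have "cmod (cis (2 * pi * t) - z) < r"
    using s(2)[of t] t assms(4) z by (cases "t = t0") auto
  moreover have "cis (2 * pi * t) \<in> A" using t(1) by (simp add: circle_param_def)
  ultimately show ?thesis by (intro bexI[of _ "cis (2 * pi * t)"]) auto
qed

section \<open>Averaging over roots of unity\<close>

lemma sum_roots_of_unity_power:
  assumes "0 < M"
  shows "(\<Sum>i<M. (cis (2 * pi / M) ^ i) ^ p) = (if M dvd p then of_nat M else 0)"
proof -
  define z where "z = cis (2 * pi / M) ^ p"
  have z_exp: "z = exp (2 * of_real pi * \<i> * of_nat p / of_nat M)"
    unfolding z_def Complex.DeMoivre unfolding cis_conv_exp using assms by (simp add: field_simps)
  have "(\<Sum>i<M. (cis (2 * pi / M) ^ i) ^ p) = (\<Sum>i<M. z ^ i)"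
    by (simp add: z_def power_mult[symmetric] mult.commute)
  also have "\<dots> = (if M dvd p then of_nat M else 0)"
  proof (cases "M dvd p")
    case True
    then have "z = 1" using complex_root_unity_eq_1[of M p] assms z_exp by simp
    then show ?thesis using True by simp
  next
    case False
    then have "z \<noteq> 1" using complex_root_unity_eq_1[of M p] assms z_exp by simp
    moreover have "z ^ M = cis (2 * pi * real p)"
      using assms by (simp add: z_def power_mult[symmetric] mult.commute Complex.DeMoivre)
    then have "z ^ M = 1"
      using cis_multiple_2pi[of "real p"] by simp
    ultimately show ?thesis using False by (simp add: geometric_sum)
  qed
  finally show ?thesis .
qed

text \<open>The j-th Taylor coefficient of lam \<mapsto> eigvec n \<mu> a lam.\<close>
definition eigvec_coeff :: "nat \<Rightarrow> complex \<Rightarrow> (nat \<Rightarrow> complex) \<Rightarrow> nat \<Rightarrow> nat \<Rightarrow> complex" where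
  "eigvec_coeff n \<mu> a j k =
     (if j = 0 then \<mu> * unit_vec 0 k else 0) + dilation_series n (\<lambda>d. unit_vec j (Suc d) - unit_vec j d) a k"

lemma eigvec_coeff_eq_dilate:
  assumes "2 \<le> n" "a 0 = 0"
  shows "eigvec_coeff n \<mu> a j k = (if j = 0 then \<mu> * unit_vec 0 k else dilate n (j - 1) a k) - dilate n j a k"
proof -
  have "dilation_series n (\<lambda>d. unit_vec j (Suc d)) a k = (if j = 0 then 0 else dilate n (j - 1) a k)"
  proof (cases j)
    case (Suc i)
    then have "(\<lambda>d. unit_vec j (Suc d)) = unit_vec i" by (simp add: unit_vec_def fun_eq_iff)
    then show ?thesis using Suc dilation_series_unit_vec[where a=a, OF assms] by simp
  qed (simp add: unit_vec_def dilation_series_def)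
  then show ?thesis
    by (simp add: eigvec_coeff_def dilation_series_diff dilation_series_unit_vec[where a=a, OF assms])
qed

lemma sum_eigvec_coeff:
  assumes "2 \<le> n" "a 0 = 0"
  shows "(\<Sum>j<Suc J. eigvec_coeff n \<mu> a j k) = \<mu> * unit_vec 0 k - dilate n J a k"
  by (induction J) (simp_all add: eigvec_coeff_eq_dilate[where a=a, OF assms])

lemma H2_eigvec_coeff:
  assumes a: "block_supported n a" and n: "2 \<le> n"
  shows "eigvec_coeff n \<mu> a j \<in> H2"
proof -
  have bound: "cmod (unit_vec j (Suc d) - unit_vec j d) \<le> 1" for d
    by (simp add: unit_vec_def)
  have "dilation_series n (\<lambda>d. unit_vec j (Suc d) - unit_vec j d) a \<in> H2"
    by (rule dilation_series_bound(1)[OF a n weighted_sum_le_tail[where D=0, OF n bound]]) simp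
  moreover have "(\<lambda>k. if j = 0 then \<mu> * unit_vec 0 k else 0) \<in> H2"
    by (cases "j = 0") (simp_all add: h2_scale(1)[OF H2_unit_vec] H2_zero)
  ultimately show ?thesis
    unfolding eigvec_coeff_def[abs_def] by (rule h2_add(1)[rotated])
qed

text \<open>The discrete Fourier coefficient (1/M) \<Sum>_i \<omega>_i^(-j) F(\<omega>_i) over the M-th roots of unity \<omega>_i,
  with \<omega>_i^(-j) written as \<omega>_i^(M - j).\<close>
definition root_of_unity_average :: "nat \<Rightarrow> nat \<Rightarrow> (complex \<Rightarrow> nat \<Rightarrow> complex) \<Rightarrow> nat \<Rightarrow> complex" where
  "root_of_unity_average M j F k =
     (\<Sum>i<M. (cis (2 * pi / M) ^ i) ^ (M - j) / of_nat M * F (cis (2 * pi / M) ^ i) k)"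

lemma root_of_unity_average_power:
  assumes "j < M"
  shows "(\<Sum>i<M. (cis (2 * pi / M) ^ i) ^ (M - j) / of_nat M * (cis (2 * pi / M) ^ i) ^ e)
    = (if M dvd (M - j + e) then 1 else 0)"
proof -
  have "(\<Sum>i<M. (cis (2 * pi / M) ^ i) ^ (M - j) / of_nat M * (cis (2 * pi / M) ^ i) ^ e)
      = (\<Sum>i<M. (cis (2 * pi / M) ^ i) ^ (M - j + e)) / of_nat M"
    unfolding power_add sum_divide_distrib by (simp add: mult_ac)
  also have "\<dots> = (if M dvd (M - j + e) then 1 else 0)"
    using sum_roots_of_unity_power[of M "M - j + e"] assms by simp
  finally show ?thesis .
qed

lemma dvd_minus_add_iff:
  fixes M j e :: nat
  assumes "j < M" "e < M"
  shows "M dvd (M - j + e) \<longleftrightarrow> e = j"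
proof
  assume dvd: "M dvd (M - j + e)"
  then have "M \<le> M - j + e" by (rule dvd_imp_le) (use assms in simp)
  then have "j \<le> e" using assms by linarith
  then have "M - j + e = M + (e - j)" using assms by arith
  then have "M dvd (e - j)" using dvd by simp
  moreover have "e - j < M" using assms by linarith
  ultimately have "e - j = 0" using nat_dvd_not_less by blast
  then show "e = j" using \<open>j \<le> e\<close> by simp
qed (use assms in simp)

lemma root_of_unity_average_eigvec:
  assumes j: "j < M"
  shows "root_of_unity_average M j (eigvec n \<mu> a) k
    = (if j = 0 then \<mu> * unit_vec 0 k else 0)
      + dilation_series n (\<lambda>d. (if M dvd (M - j + Suc d) then 1 else 0)
                              - (if M dvd (M - j + d) then 1 else 0)) a k"
proof -
  define \<omega> where "\<omega> = cis (2 * pi / M)"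
  define w where "w i = (\<omega> ^ i) ^ (M - j) / of_nat M" for i
  have avg: "(\<Sum>i<M. w i * (\<omega> ^ i) ^ e) = (if M dvd (M - j + e) then 1 else 0)" for e
    using root_of_unity_average_power[OF j] by (simp add: w_def \<omega>_def)
  have "root_of_unity_average M j (eigvec n \<mu> a) k = (\<Sum>i<M. w i * eigvec n \<mu> a (\<omega> ^ i) k)"
    by (simp add: root_of_unity_average_def w_def \<omega>_def)
  also have "\<dots> = (\<Sum>i<M. w i) * (\<mu> * unit_vec 0 k)
        + dilation_series n (\<lambda>d. \<Sum>i<M. w i * ((\<omega> ^ i) ^ Suc d - (\<omega> ^ i) ^ d)) a k"
    by (simp add: eigvec_def distrib_left sum.distrib sum_distrib_right dilation_series_sum del: power_Suc)
  also have "(\<Sum>i<M. w i) = (if j = 0 then 1 else 0)"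
    using avg[of 0] dvd_minus_add_iff[OF j, of 0] j by simp
  finally show ?thesis
    by (simp add: right_diff_distrib sum_subtractf avg del: power_Suc)
qed

lemma h2_norm_eigvec_coeff_minus_average_le:
  assumes a: "block_supported n a" and n: "2 \<le> n" and j: "j < M"
  shows "h2_norm (\<lambda>k. eigvec_coeff n \<mu> a j k - root_of_unity_average M j (eigvec n \<mu> a) k)
    \<le> sqrt (8 * (1/2) ^ (M - 1)) * h2_norm a"
proof -
  define \<rho> where "\<rho> e = (if M dvd (M - j + e) then 1 else 0 :: complex)" for e
  define \<gamma> where "\<gamma> d = (unit_vec j (Suc d) - unit_vec j d) - (\<rho> (Suc d) - \<rho> d)" for d
  have "(\<lambda>k. eigvec_coeff n \<mu> a j k - root_of_unity_average M j (eigvec n \<mu> a) k)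
      = dilation_series n \<gamma> a"
    by (simp add: fun_eq_iff eigvec_coeff_def root_of_unity_average_eigvec[OF j] \<gamma>_def[abs_def]
        \<rho>_def dilation_series_diff)
  moreover have "h2_norm (dilation_series n \<gamma> a) \<le> sqrt (2 * 2\<^sup>2 * (1/2) ^ (M - 1)) * h2_norm a"
  proof (intro dilation_series_bound(2)[OF a n] weighted_sum_le_tail[OF n])
    show "cmod (\<gamma> d) \<le> 2" for d
      unfolding \<gamma>_def \<rho>_def unit_vec_def by (auto simp: norm_minus_commute)
    show "\<gamma> d = 0" if "d < M - 1" for d
      using that dvd_minus_add_iff[OF j, of d] dvd_minus_add_iff[OF j, of "Suc d"]
      by (simp add: \<gamma>_def \<rho>_def unit_vec_def)
  qed
  ultimately show ?thesis by simp
qed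

lemma W_star_seed_unit_vec:
  assumes "1 \<le> p" "p < n"
  shows "W_star_seed n (unit_vec p) 1"
  unfolding W_star_seed_def block_supported_def
proof (intro conjI allI exI[of _ p])
  show "unit_vec p k \<noteq> 0 \<longrightarrow> p \<le> k \<and> k < n * p" for k
    using assms by (simp add: unit_vec_def)
  show "W_star n (unit_vec p) j = 1 * unit_vec 0 j" for j
    using assms by (simp add: W_star_unit_vec)
qed (rule assms(1))

lemma W_star_seed_unit_vec_minus_dilate:
  assumes "2 \<le> n" "n \<le> k"
  shows "W_star_seed n (\<lambda>k'. unit_vec k k' - dilate n 1 (unit_vec (k div n)) k') 0"
  unfolding W_star_seed_def block_supported_def
proof (intro conjI allI exI[of _ "n * (k div n)"])
  define p where "p = k div n"
  have "1 \<le> p" using assms div_le_mono[OF assms(2), of n] by (simp add: p_def)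
  show "1 \<le> n * (k div n)" using \<open>1 \<le> p\<close> assms(1) by (simp add: p_def)
  have block: "n * p \<le> k' \<and> k' < n * (n * p)" if "k' div n = p" for k'
  proof -
    have "k' = n * p + k' mod n" using that div_mult_mod_eq[of k' n] by (simp add: mult.commute)
    moreover have "k' mod n < n" using assms(1) by simp
    ultimately have "n * p \<le> k'" "k' < n * p + n" by linarith+
    moreover have "n * p + n \<le> 2 * (n * p)" using \<open>1 \<le> p\<close> by simp
    moreover have "2 * (n * p) \<le> n * (n * p)" using assms(1) by (rule mult_right_mono) simp
    ultimately show ?thesis by linarith
  qed
  show "unit_vec k k' - dilate n 1 (unit_vec (k div n)) k' \<noteq> 0 \<longrightarrow>
      n * (k div n) \<le> k' \<and> k' < n * (n * (k div n))" for k'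
    using block[of k'] block[of k] by (auto simp: unit_vec_def dilate_def p_def)
  show "W_star n (\<lambda>k'. unit_vec k k' - dilate n 1 (unit_vec (k div n)) k') j = 0 * unit_vec 0 j" for j
    using assms(1) W_star_dilate_Suc[of n 0 "unit_vec (k div n)" j]
    by (simp add: W_star_diff W_star_unit_vec)
qed

locale full_measure_eigenvalues =
  fixes n :: nat and A :: "complex set"
  assumes n_ge_2: "2 \<le> n"
    and A_measurable: "circle_measurable A" and A_measure: "circle_measure A = 1"
begin

abbreviation eig_span :: "(nat \<Rightarrow> complex) set" where
  "eig_span \<equiv> closed_span (\<Union>lam\<in>A. eigsp n lam)"

lemma eigsps_subset_H2: "(\<Union>lam\<in>A. eigsp n lam) \<subseteq> H2"
  by (auto simp: eigsp_def)

lemma eigvec_in_eig_span: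
  assumes seed: "W_star_seed n a \<mu>" and lam: "cmod lam = 1"
  shows "eigvec n \<mu> a lam \<in> eig_span"
proof (rule closed_span_approx[OF eigsps_subset_H2])
  have a: "block_supported n a" using seed by (simp add: W_star_seed_def)
  show "eigvec n \<mu> a lam \<in> H2"
    using eigvec_in_eigsp[OF seed n_ge_2] lam by (simp add: eigsp_def)
  fix \<epsilon> :: real assume "\<epsilon> > 0"
  define h where "h = h2_norm a"
  have "0 \<le> h" using h2_norm_nonneg[OF block_supported_H2[OF a]] by (simp add: h_def)
  define r where "r = (\<epsilon> / (h + 1))\<^sup>2 / 32"
  have "0 < r" using \<open>\<epsilon> > 0\<close> \<open>0 \<le> h\<close> by (simp add: r_def)
  obtain lam' where lam': "lam' \<in> A" "cmod lam' = 1" "cmod (lam' - lam) < r"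
    using full_measure_dense_in_circle[OF A_measurable A_measure lam \<open>0 < r\<close>] by blast
  have "eigvec n \<mu> a lam' \<in> (\<Union>lam\<in>A. eigsp n lam)"
    using eigvec_in_eigsp[OF seed n_ge_2, of lam'] lam' by auto
  then have "eigvec n \<mu> a lam' \<in> eig_span"
    using subset_closed_span[OF eigsps_subset_H2] by blast
  moreover have "h2_norm (\<lambda>k. eigvec n \<mu> a lam k - eigvec n \<mu> a lam' k) < \<epsilon>"
  proof -
    have "h2_norm (\<lambda>k. eigvec n \<mu> a lam k - eigvec n \<mu> a lam' k) \<le> sqrt (32 * cmod (lam - lam')) * h"
      using h2_norm_eigvec_diff_le[OF a n_ge_2, of lam' lam \<mu>] lam lam' by (simp add: h_def)
    also have "\<dots> \<le> sqrt (32 * r) * h"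
      using lam'(3) \<open>0 \<le> h\<close> by (intro mult_right_mono) (simp_all add: norm_minus_commute)
    also have "sqrt (32 * r) = \<epsilon> / (h + 1)"
      using \<open>\<epsilon> > 0\<close> \<open>0 \<le> h\<close> by (simp add: r_def)
    also have "\<epsilon> / (h + 1) * h < \<epsilon>"
      using \<open>\<epsilon> > 0\<close> \<open>0 \<le> h\<close> by (simp add: field_simps)
    finally show ?thesis .
  qed
  ultimately show "\<exists>z\<in>eig_span. h2_norm (\<lambda>k. eigvec n \<mu> a lam k - z k) < \<epsilon>" by blast
qed

lemma eigvec_coeff_in_eig_span:
  assumes seed: "W_star_seed n a \<mu>"
  shows "eigvec_coeff n \<mu> a j \<in> eig_span"
proof (rule closed_span_approx[OF eigsps_subset_H2])
  have a: "block_supported n a" using seed by (simp add: W_star_seed_def)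
  show "eigvec_coeff n \<mu> a j \<in> H2" by (rule H2_eigvec_coeff[OF a n_ge_2])
  fix \<epsilon> :: real assume "\<epsilon> > 0"
  have "(\<lambda>D. sqrt (8 * (1/2) ^ D) * h2_norm a) \<longlonglongrightarrow> sqrt (8 * 0) * h2_norm a"
    by (intro tendsto_intros) simp
  then have "eventually (\<lambda>D. sqrt (8 * (1/2) ^ D) * h2_norm a < \<epsilon>) sequentially"
    using \<open>\<epsilon> > 0\<close> by (intro order_tendstoD(2)) simp_all
  from eventually_conj[OF this eventually_ge_at_top[of j]]
  obtain D0 where "\<And>D. D \<ge> D0 \<Longrightarrow> sqrt (8 * (1/2) ^ D) * h2_norm a < \<epsilon> \<and> j \<le> D"
    by (auto simp: eventually_sequentially)
  then obtain D where D: "j \<le> D" "sqrt (8 * (1/2) ^ D) * h2_norm a < \<epsilon>" by blast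
  have "root_of_unity_average (Suc D) j (eigvec n \<mu> a) \<in> eig_span"
    unfolding root_of_unity_average_def
    by (intro closed_span_sum[OF eigsps_subset_H2] closed_span_mult[OF eigsps_subset_H2] eigvec_in_eig_span[OF seed])
      (simp_all add: norm_power)
  moreover have "h2_norm (\<lambda>k. eigvec_coeff n \<mu> a j k - root_of_unity_average (Suc D) j (eigvec n \<mu> a) k) < \<epsilon>"
    using h2_norm_eigvec_coeff_minus_average_le[OF a n_ge_2, of j "Suc D" \<mu>] D by simp
  ultimately show "\<exists>z\<in>eig_span. h2_norm (\<lambda>k. eigvec_coeff n \<mu> a j k - z k) < \<epsilon>" by blast
qed

lemma seed_in_eig_span:
  assumes seed: "W_star_seed n a \<mu>"
  shows "(\<lambda>k. \<mu> * unit_vec 0 k) \<in> eig_span" "dilate n J a \<in> eig_span"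
proof -
  show e0: "(\<lambda>k. \<mu> * unit_vec 0 k) \<in> eig_span"
    using eigvec_in_eig_span[OF seed, of 1] by (simp add: eigvec_1)
  have a0: "a 0 = 0" using seed block_supported_0 by (auto simp: W_star_seed_def)
  have "(\<lambda>k. \<Sum>j<Suc J. eigvec_coeff n \<mu> a j k) = (\<lambda>k. \<mu> * unit_vec 0 k - dilate n J a k)"
    by (intro ext sum_eigvec_coeff[where a=a, OF n_ge_2 a0])
  moreover have "(\<lambda>k. \<Sum>j<Suc J. eigvec_coeff n \<mu> a j k) \<in> eig_span"
    by (intro closed_span_sum[OF eigsps_subset_H2] eigvec_coeff_in_eig_span[OF seed]) simp
  ultimately have "(\<lambda>k. \<mu> * unit_vec 0 k - dilate n J a k) \<in> eig_span" by simp
  from closed_span_diff[OF eigsps_subset_H2 e0 this] show "dilate n J a \<in> eig_span" by simp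
qed

lemma dilate_unit_vec_in_eig_span: "1 \<le> k \<Longrightarrow> dilate n J (unit_vec k) \<in> eig_span"
proof (induction k arbitrary: J rule: less_induct)
  case (less k)
  show ?case
  proof (cases "k < n")
    case True
    show ?thesis by (rule seed_in_eig_span(2)[OF W_star_seed_unit_vec[OF less.prems True]])
  next
    case False
    define p where "p = k div n"
    have "n div n \<le> k div n" using False by (intro div_le_mono) simp
    then have "1 \<le> p" using n_ge_2 by (simp add: p_def)
    have "p < k" unfolding p_def using n_ge_2 less.prems by (intro div_less_dividend) auto
    have "dilate n J (dilate n 1 (unit_vec p)) \<in> eig_span"
      unfolding dilate_dilate by (rule less.IH[OF \<open>p < k\<close> \<open>1 \<le> p\<close>])
    with seed_in_eig_span(2)[OF W_star_seed_unit_vec_minus_dilate[OF n_ge_2]] False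
    have "(\<lambda>k''. dilate n J (\<lambda>k'. unit_vec k k' - dilate n 1 (unit_vec p) k') k''
        + dilate n J (dilate n 1 (unit_vec p)) k'') \<in> eig_span"
      unfolding p_def by (intro closed_span_add[OF eigsps_subset_H2]) simp_all
    then show ?thesis by (simp add: dilate_diff)
  qed
qed

lemma unit_vec_in_eig_span: "unit_vec k \<in> eig_span"
proof (cases "k = 0")
  case True
  then show ?thesis
    using seed_in_eig_span(1)[OF W_star_seed_unit_vec[of 1 n]] n_ge_2 by simp
next
  case False
  then show ?thesis using dilate_unit_vec_in_eig_span[of k 0] by simp
qed

lemma H2_subset_eig_span: "H2 \<subseteq> eig_span"
proof
  fix f assume f: "f \<in> H2"
  show "f \<in> eig_span"
  proof (rule closed_span_approx[OF eigsps_subset_H2 f])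
    fix \<epsilon> :: real assume "\<epsilon> > 0"
    then obtain N where N: "h2_norm (\<lambda>k. if k < N then 0 else f k) < \<epsilon>"
      using h2_norm_tail_small[OF f] by blast
    have "(\<lambda>k. \<Sum>i<N. f i * unit_vec i k) \<in> eig_span"
      by (intro closed_span_sum[OF eigsps_subset_H2] closed_span_mult[OF eigsps_subset_H2] unit_vec_in_eig_span) simp
    moreover have "(\<Sum>i<N. f i * unit_vec i k) = (if k < N then f k else 0)" for k
    proof -
      have "(\<Sum>i<N. f i * unit_vec i k) = (\<Sum>i<N. if i = k then f k else 0)"
        by (intro sum.cong) (auto simp: unit_vec_def)
      then show ?thesis by simp
    qed
    then have "(\<lambda>k. f k - (\<Sum>i<N. f i * unit_vec i k)) = (\<lambda>k. if k < N then 0 else f k)"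
      by auto
    ultimately show "\<exists>z\<in>eig_span. h2_norm (\<lambda>k. f k - z k) < \<epsilon>"
      using N by (intro bexI[of _ "\<lambda>k. \<Sum>i<N. f i * unit_vec i k"]) auto
  qed
qed

end

theorem mainTheorem7:
  fixes n :: nat and A :: "complex set"
  assumes "n \<ge> 2"
    and "A \<subseteq> sphere 0 1"
    and "circle_measurable A"
    and "circle_measure A = 1"
  shows "\<forall>f\<in>H2. \<forall>\<epsilon>>0. \<exists>(N::nat) (c::nat \<Rightarrow> complex) v lam.
           (\<forall>i<N. lam i \<in> A \<and> v i \<in> eigsp n (lam i)) \<and>
           h2_norm (\<lambda>k. f k - (\<Sum>i<N. c i * v i k)) < \<epsilon>"
proof (intro ballI allI impI)
  fix f :: "nat \<Rightarrow> complex" and \<epsilon> :: real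
  assume "f \<in> H2" "0 < \<epsilon>"
  interpret full_measure_eigenvalues n A
    using assms(1,3,4) by unfold_locales
  obtain y where y: "y \<in> lin_combs (\<Union>lam\<in>A. eigsp n lam)" "h2_norm (\<lambda>k. f k - y k) < \<epsilon>"
    using H2_subset_eig_span \<open>f \<in> H2\<close> \<open>0 < \<epsilon>\<close> by (auto simp: closed_span_def)
  obtain N :: nat and c v lam where "\<forall>i<N. lam i \<in> A \<and> v i \<in> eigsp n (lam i)"
    and "y = (\<lambda>k. \<Sum>i<N. c i * v i k)"
    using lin_combs_UN_finite_sum[OF y(1)] by blast
  with y(2) show "\<exists>(N::nat) (c::nat \<Rightarrow> complex) v lam.
      (\<forall>i<N. lam i \<in> A \<and> v i \<in> eigsp n (lam i)) \<and> h2_norm (\<lambda>k. f k - (\<Sum>i<N. c i * v i k)) < \<epsilon>"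
    by blast
qed

end
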